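(* Suppose that $K$ is a totally disconnected compact Hausdorff space which has no $G_\delta$ point and $\mathcal A$ is a countable Boolean subalgebra of $\mathrm{Clop}(K)$. Then for every ultrafilter $\mathcal U$ of $\mathcal A$ there is $V\in\mathrm{Clop}(K)\setminus\mathcal A$ which splits $\mathcal U$.
   Context: $\mathrm{Clop}(K)$ is the Boolean algebra of clopen subsets of $K$. A $G_\delta$ point is one that is an intersection of countably many open sets. For Boolean algebras $\mathcal A\subseteq\mathcal B$, $B\in\mathcal B\setminus\mathcal A$ splits an ultrafilter $\mathcal U$ of $\mathcal A$ if $A\wedge B\neq0\neq A\wedge(1-B)$ for all $A\in\mathcal U$. *)

theory Defs
  imports "HOL-Analysis.Analysis"
begin

definition totally_disconnected_space :: "'a::topological_space itself \<Rightarrow> bool" where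
  "totally_disconnected_space _ \<longleftrightarrow> (\<forall>S::'a set. connected S \<longrightarrow> (\<exists>a. S \<subseteq> {a}))"

definition Clop :: "'a::topological_space set set" where
  "Clop = {S. open S \<and> closed S}"

definition boolean_subalgebra :: "'a set set \<Rightarrow> bool" where
  "boolean_subalgebra \<A> \<longleftrightarrow>
     {} \<in> \<A> \<and> UNIV \<in> \<A> \<and>
     (\<forall>a\<in>\<A>. - a \<in> \<A>) \<and>
     (\<forall>a\<in>\<A>. \<forall>b\<in>\<A>. a \<union> b \<in> \<A>) \<and>
     (\<forall>a\<in>\<A>. \<forall>b\<in>\<A>. a \<inter> b \<in> \<A>)"

definition ultrafilter_of :: "'a set set \<Rightarrow> 'a set set \<Rightarrow> bool" where
  "ultrafilter_of \<A> \<U> \<longleftrightarrow>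
     \<U> \<subseteq> \<A> \<and> UNIV \<in> \<U> \<and> {} \<notin> \<U> \<and>
     (\<forall>a\<in>\<U>. \<forall>b\<in>\<U>. a \<inter> b \<in> \<U>) \<and>
     (\<forall>a\<in>\<U>. \<forall>b\<in>\<A>. a \<subseteq> b \<longrightarrow> b \<in> \<U>) \<and>
     (\<forall>a\<in>\<A>. a \<in> \<U> \<or> - a \<in> \<U>)"

definition splits :: "'a set \<Rightarrow> 'a set set \<Rightarrow> bool" where
  "splits B \<U> \<longleftrightarrow> (\<forall>a\<in>\<U>. a \<inter> B \<noteq> {} \<and> a \<inter> - B \<noteq> {})"

end

theory Submission
  imports Defs
begin

text \<open>The intersection of the ultrafilter \<open>\<U>\<close> is nonempty by compactness and is a
  \<open>G\<^sub>\<delta>\<close> set, being a countable intersection of clopen sets; having no \<open>G\<^sub>\<delta>\<close> points,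
  it contains two distinct points \<open>x\<close> and \<open>y\<close>. A clopen set containing \<open>x\<close> but not \<open>y\<close>
  exists by total disconnectedness, and it splits \<open>\<U>\<close>; it cannot belong to \<open>\<A>\<close>, since
  then it or its complement would belong to \<open>\<U>\<close> and miss \<open>y\<close> or \<open>x\<close>.\<close>

lemma Hausdorff_space_euclidean_t2: "Hausdorff_space (euclidean :: 'a::t2_space topology)"
  unfolding Hausdorff_space_def
  by (metis disjnt_def hausdorff open_openin topspace_euclidean)

lemma totally_disconnected_connected_component_of:
  assumes "totally_disconnected_space TYPE('a::topological_space)"
  shows "connected_component_of_set euclidean (x::'a) = {x}"
proof -
  have "connected (connected_component_of_set euclidean x)"
    by (simp add: connectedin_connected_component_of flip: connectedin_iff_connected)
  moreover have "\<forall>S::'a set. connected S \<longrightarrow> (\<exists>a. S \<subseteq> {a})"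
    using assms by (simp add: totally_disconnected_space_def)
  ultimately obtain a where "connected_component_of_set euclidean x \<subseteq> {a}"
    by blast
  moreover have "x \<in> connected_component_of_set euclidean x"
    by (simp add: connected_component_of_refl)
  ultimately show ?thesis
    by (metis empty_iff singletonD subset_singletonD)
qed

lemma totally_disconnected_separating_clopen:
  fixes x y :: "'a::t2_space"
  assumes "locally_compact_space (euclidean :: 'a topology)"
    and "totally_disconnected_space TYPE('a)"
    and "x \<noteq> y"
  obtains V where "V \<in> Clop" "x \<in> V" "y \<notin> V"
proof -
  have "{x} \<in> connected_components_of euclidean"
    unfolding connected_components_of_def
    using totally_disconnected_connected_component_of[OF assms(2)] by force
  then have "separated_between euclidean {x} {y}"
    using assms(1,3)
    by (intro separated_between_compact_connected_component)
       (auto simp: Hausdorff_space_euclidean_t2 disjnt_def)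
  then obtain U W where "open U" "open W" "U \<union> W = UNIV" "disjnt U W" "x \<in> U" "y \<in> W"
    unfolding separated_between_def by auto
  moreover from this have "U = - W"
    by (auto simp: disjnt_def)
  ultimately show ?thesis
    using that[of U] by (auto simp: Clop_def)
qed

lemma ultrafilter_of_Inter_finite:
  assumes "ultrafilter_of \<A> \<U>" "finite F" "F \<subseteq> \<U>"
  shows "\<Inter>F \<in> \<U>"
  using assms(2,3)
proof (induction F rule: finite_induct)
  case empty
  then show ?case using assms(1) by (simp add: ultrafilter_of_def)
next
  case (insert a F)
  then show ?case using assms(1) by (simp add: ultrafilter_of_def)
qed

lemma ultrafilter_of_Inter_nonempty:
  assumes "compact (UNIV :: 'a::topological_space set)"
    and "ultrafilter_of \<A> \<U>"
    and "\<forall>a\<in>\<U>. closed (a :: 'a set)"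
  shows "\<Inter>\<U> \<noteq> {}"
proof -
  have "{} \<notin> \<U>"
    using assms(2) by (simp add: ultrafilter_of_def)
  then have "UNIV \<inter> \<Inter>F \<noteq> {}" if "finite F" "F \<subseteq> \<U>" for F
    using ultrafilter_of_Inter_finite[OF assms(2) that] by (metis Int_UNIV_left)
  then show ?thesis
    using compact_imp_fip[OF assms(1)] assms(3) by auto
qed

lemma gdelta_countable_Inter:
  assumes "countable \<F>" "\<forall>S\<in>\<F>. open S"
  shows "gdelta (\<Inter>\<F>)"
proof (cases "\<F> = {}")
  case True
  have "gdelta (\<Inter>(range (\<lambda>n::nat. UNIV)))"
    by (rule gdelta.intros) simp
  then show ?thesis using True by simp
next
  case False
  have "gdelta (\<Inter>(range (from_nat_into \<F>)))"
    using assms(2) from_nat_into[OF False] by (intro gdelta.intros) blast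
  then show ?thesis
    using range_from_nat_into[OF False assms(1)] by simp
qed

lemma splits_if_separates_points_of_Inter:
  assumes "x \<in> \<Inter>\<U>" "y \<in> \<Inter>\<U>" "x \<in> V" "y \<notin> V"
  shows "splits V \<U>"
  using assms unfolding splits_def by blast

lemma splits_imp_notin_algebra:
  assumes "ultrafilter_of \<A> \<U>" "splits V \<U>"
  shows "V \<notin> \<A>"
proof
  assume "V \<in> \<A>"
  then have "V \<in> \<U> \<or> - V \<in> \<U>"
    using assms(1) by (simp add: ultrafilter_of_def)
  moreover have "a \<inter> V \<noteq> {} \<and> a \<inter> - V \<noteq> {}" if "a \<in> \<U>" for a
    using assms(2) that by (simp add: splits_def)
  ultimately show False
    by (metis Compl_disjoint Compl_disjoint2 Int_absorb)
qed

theorem lemma2p2: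
  fixes \<A> \<U> :: "'a::t2_space set set"
  assumes "compact (UNIV :: 'a set)"
    and "totally_disconnected_space TYPE('a)"
    and "\<forall>x::'a. \<not> gdelta {x}"
    and "countable \<A>"
    and "boolean_subalgebra \<A>"
    and "\<A> \<subseteq> Clop"
    and "ultrafilter_of \<A> \<U>"
  shows "\<exists>V \<in> Clop - \<A>. splits V \<U>"
proof -
  have "\<U> \<subseteq> \<A>"
    using assms(7) by (simp add: ultrafilter_of_def)
  then have U_clopen: "\<forall>a\<in>\<U>. open a \<and> closed a" and "countable \<U>"
    using assms(4,6) countable_subset by (auto simp: Clop_def)
  then have "gdelta (\<Inter>\<U>)"
    by (simp add: gdelta_countable_Inter)
  have "\<Inter>\<U> \<noteq> {}"
    using ultrafilter_of_Inter_nonempty[OF assms(1,7)] U_clopen by simp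
  then obtain x where x: "x \<in> \<Inter>\<U>"
    by blast
  have "\<Inter>\<U> \<noteq> {x}"
    using \<open>gdelta (\<Inter>\<U>)\<close> assms(3) by metis
  then have "\<Inter>\<U> - {x} \<noteq> {}"
    using x by (metis Diff_eq_empty_iff empty_iff subset_singletonD)
  then obtain y where y: "y \<in> \<Inter>\<U>" "y \<noteq> x"
    by blast
  have "locally_compact_space (euclidean :: 'a topology)"
    using assms(1) by (simp add: compact_imp_locally_compact_space compact_space_def compactin_euclidean_iff)
  then obtain V where V: "V \<in> Clop" "x \<in> V" "y \<notin> V"
    using totally_disconnected_separating_clopen[OF _ assms(2) y(2)[symmetric]] by blast
  then have "splits V \<U>"
    using x y(1) by (intro splits_if_separates_points_of_Inter)
  then show ?thesis
    using V(1) splits_imp_notin_algebra[OF assms(7)] by blast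
qed

end
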